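(* Let $G=\bigl((f_j)_{j=1}^n;(\mu^{R})_{\emptyset\ne R\subseteq[n]}\bigr)$ be an $n$-resource selection game with $f_1,\ldots,f_n$ continuous. Then $P_G\in D_G$ and $E_G(P_G)=h_G$; i.e., $P_G\in\arg\max_{S\in D_G}E_G(S)$ (so $P_G$ is the greatest element of this set of maximizers).
   Context: An $n$-resource selection game is $G=\bigl((f_j)_{j=1}^n;(\mu^{R})_{\emptyset\ne R\subseteq[n]}\bigr)$ with each $f_j:[0,\infty)\to\mathbb{R}$ nondecreasing and each $\mu^R\ge0$. Equalization: for nondecreasing $g_1,\ldots,g_m:[0,\infty)\to\mathbb{R}\cup\{\mathrm{undefined}\}$, $\mathrm{eq}(g_1,\ldots,g_m)(\mu)=g_1(\mu_1)$ if there exist $\mu_1,\ldots,\mu_m\ge0$ summing to $\mu$ with $g_1(\mu_1)=\cdots=g_m(\mu_m)\in\mathbb{R}$, else $\mathrm{undefined}$. For nonempty $S\subseteq[n]$: $E_G(S)=\mathrm{eq}(f_k:k\in S)\bigl(\sum_{\emptyset\ne R\subseteq S}\mu^R\bigr)$; $M_G(S)$ is the set of nonempty $S'\subseteq S$ such that for every $0\le\mu\le\sum_{R\subseteq S,\,R\cap S'\ne\emptyset}\mu^R$, $\mathrm{eq}(f_k:k\in S')(\mu)\ne E_G(S)$ ($\mathrm{undefined}$ differs from every real); $D_G=\{S: E_G(S)\in\mathbb{R},\ M_G(S)=\emptyset\}$; $h_G=\max_{S\in D_G}E_G(S)$; $P_G=\bigcup\{S\in D_G:E_G(S)=h_G\}$.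 *)

theory Defs
  imports Complex_Main
begin

text \<open>An n-resource selection game: resources are indexed by [n] = {1..n};
  f j is the cost function of resource j (only its values on [0,\<infinity>) matter),
  mu R is the demand of the player type whose allowed resources are R.
  The value "undefined" of the paper is modelled by None.\<close>

definition eqz :: "(nat \<Rightarrow> real \<Rightarrow> real) \<Rightarrow> nat set \<Rightarrow> real \<Rightarrow> real option" where
  "eqz f S m =
    (if \<exists>c x. (\<forall>k\<in>S. 0 \<le> x k) \<and> (\<Sum>k\<in>S. x k) = m \<and> (\<forall>k\<in>S. f k (x k) = c)
     then Some (SOME c. \<exists>x. (\<forall>k\<in>S. 0 \<le> x k) \<and> (\<Sum>k\<in>S. x k) = m \<and> (\<forall>k\<in>S. f k (x k) = c))
     else None)"

definition E_G :: "(nat \<Rightarrow> real \<Rightarrow> real) \<Rightarrow> (nat set \<Rightarrow> real) \<Rightarrow> nat set \<Rightarrow> real option" where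
  "E_G f mu S = eqz f S (\<Sum>R\<in>{R. R \<noteq> {} \<and> R \<subseteq> S}. mu R)"

definition M_G :: "(nat \<Rightarrow> real \<Rightarrow> real) \<Rightarrow> (nat set \<Rightarrow> real) \<Rightarrow> nat set \<Rightarrow> nat set set" where
  "M_G f mu S = {S'. S' \<noteq> {} \<and> S' \<subseteq> S \<and>
     (\<forall>m. 0 \<le> m \<and> m \<le> (\<Sum>R\<in>{R. R \<subseteq> S \<and> R \<inter> S' \<noteq> {}}. mu R) \<longrightarrow>
        eqz f S' m \<noteq> E_G f mu S)}"

definition D_G :: "nat \<Rightarrow> (nat \<Rightarrow> real \<Rightarrow> real) \<Rightarrow> (nat set \<Rightarrow> real) \<Rightarrow> nat set set" where
  "D_G n f mu = {S. S \<noteq> {} \<and> S \<subseteq> {1..n} \<and> E_G f mu S \<noteq> None \<and> M_G f mu S = {}}"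

definition h_G :: "nat \<Rightarrow> (nat \<Rightarrow> real \<Rightarrow> real) \<Rightarrow> (nat set \<Rightarrow> real) \<Rightarrow> real" where
  "h_G n f mu = Max ((\<lambda>S. the (E_G f mu S)) ` D_G n f mu)"

definition P_G :: "nat \<Rightarrow> (nat \<Rightarrow> real \<Rightarrow> real) \<Rightarrow> (nat set \<Rightarrow> real) \<Rightarrow> nat set" where
  "P_G n f mu = \<Union>{S \<in> D_G n f mu. E_G f mu S = Some (h_G n f mu)}"

end

(* Monotone costs make equalization levels unique. Let h be the top level over D_G and A k the
   least load at which resource k costs h. Every S in D_G with E_G S = h satisfies a Hall-type
   condition: T \<mapsto> demand T - (\<Sum>k\<in>T. A k) is maximal at S among the subsets of S. This
   function is supermodular (mu \<ge> 0), so the condition passes to the union P_G; in particular the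
   least loads fit into the demand of P_G, and an intermediate-value argument for the continuous
   costs equalizes P_G at some level d \<ge> h. Conversely every set with a level is dominated by a
   member of D_G (remove a blocking subset and recurse), so d = h, and the Hall condition also
   rules out blocking subsets of P_G. *)

theory Submission imports Defs "HOL-Analysis.Analysis" begin

lemma mono_on_nonneg_le:
  fixes \<phi> :: "real \<Rightarrow> real"
  shows "mono_on {0..} \<phi> \<Longrightarrow> 0 \<le> x \<Longrightarrow> x \<le> y \<Longrightarrow> \<phi> x \<le> \<phi> y"
  by (rule mono_onD) auto

lemma mono_level_interval:
  fixes \<phi> :: "real \<Rightarrow> real"
  assumes mono: "mono_on {0..} \<phi>" and cont: "continuous_on {0..} \<phi>"
    and "0 \<le> m" "\<phi> 0 \<le> d" "d \<le> \<phi> m"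
  obtains lo hi where "0 \<le> lo" "lo \<le> hi" "hi \<le> m" "\<phi> lo = d" "\<phi> hi = d"
    "\<And>x. 0 \<le> x \<Longrightarrow> x < lo \<Longrightarrow> \<phi> x < d" "\<And>x. hi < x \<Longrightarrow> x \<le> m \<Longrightarrow> d < \<phi> x"
proof -
  define Z where "Z = {x \<in> {0..m}. \<phi> x = d}"
  have cont_m: "continuous_on {0..m} \<phi>"
    using cont by (rule continuous_on_subset) auto
  have "Z \<noteq> {}"
    using IVT'[of \<phi> 0 d m] cont_m assms(3-5) by (auto simp: Z_def)
  moreover have "closed Z"
    unfolding Z_def by (rule continuous_closed_preimage_constant[OF cont_m]) auto
  moreover have "bdd_below Z" "bdd_above Z"
    by (auto simp: Z_def intro: bdd_belowI[of _ 0] bdd_aboveI[of _ m])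
  ultimately have in_Z: "Inf Z \<in> Z" "Sup Z \<in> Z" and bounds: "\<And>x. x \<in> Z \<Longrightarrow> Inf Z \<le> x \<and> x \<le> Sup Z"
    by (auto intro: closed_contains_Inf closed_contains_Sup cInf_lower cSup_upper)
  show ?thesis
  proof (rule that[of "Inf Z" "Sup Z"])
    show "0 \<le> Inf Z" "Sup Z \<le> m" "\<phi> (Inf Z) = d" "\<phi> (Sup Z) = d" "Inf Z \<le> Sup Z"
      using in_Z bounds by (auto simp: Z_def)
  next
    fix x assume x: "0 \<le> x" "x < Inf Z"
    have "\<phi> x \<le> d"
      using mono_on_nonneg_le[OF mono x(1), of "Inf Z"] x(2) in_Z by (auto simp: Z_def)
    moreover have "x \<notin> Z" using bounds x(2) by force
    ultimately show "\<phi> x < d" using x in_Z by (auto simp: Z_def)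
  next
    fix x assume x: "Sup Z < x" "x \<le> m"
    have "d \<le> \<phi> x"
      using mono_on_nonneg_le[OF mono _ , of "Sup Z" x] x(1) in_Z by (auto simp: Z_def)
    moreover have "x \<notin> Z" using bounds x(1) by force
    ultimately show "d < \<phi> x" using x in_Z by (auto simp: Z_def)
  qed
qed

lemma sum_interpolate:
  fixes lo hi :: "'a \<Rightarrow> real"
  assumes "finite T" "\<forall>k\<in>T. lo k \<le> hi k" "sum lo T \<le> m" "m \<le> sum hi T"
  obtains y where "\<forall>k\<in>T. lo k \<le> y k \<and> y k \<le> hi k" "sum y T = m"
proof -
  define y where "y t k = lo k + t * (hi k - lo k)" for t k
  have "continuous_on {0..1} (\<lambda>t. \<Sum>k\<in>T. y t k)"
    unfolding y_def by (intro continuous_intros)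
  then obtain t where t: "0 \<le> t" "t \<le> 1" "(\<Sum>k\<in>T. y t k) = m"
    using IVT'[of "\<lambda>t. \<Sum>k\<in>T. y t k" 0 m 1] assms(3,4) by (auto simp: y_def)
  have "lo k \<le> y t k \<and> y t k \<le> hi k" if "k \<in> T" for k
    using t(1,2) assms(2) that mult_left_le_one_le[of "hi k - lo k" t] by (auto simp: y_def)
  thus ?thesis using that t(3) by blast
qed

text \<open>Starting from an allocation \<open>a\<close> at common level \<open>c\<close> that uses less than \<open>m\<close>, the
  level is raised to the supremum of the levels whose least loads \<open>load d k\<close> (the least
  \<open>x \<in> [0, m]\<close> with \<open>d \<le> f k x\<close>, or \<open>m\<close> if there is none) still undershoot \<open>m\<close>.\<close>

locale level_search =
  fixes T :: "'a set" and f :: "'a \<Rightarrow> real \<Rightarrow> real" and a :: "'a \<Rightarrow> real" and c m :: real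
  assumes finite: "finite T" and nonempty: "T \<noteq> {}"
    and mono: "\<forall>k\<in>T. mono_on {0..} (f k)" and cont: "\<forall>k\<in>T. continuous_on {0..} (f k)"
    and a_nonneg: "\<forall>k\<in>T. 0 \<le> a k" and a_level: "\<forall>k\<in>T. f k (a k) = c" and a_sum: "sum a T < m"
begin

definition load :: "real \<Rightarrow> 'a \<Rightarrow> real" where
  "load d k = Inf ({x. 0 \<le> x \<and> x \<le> m \<and> d \<le> f k x} \<union> {m})"

definition underloaded :: "real set" where
  "underloaded = {d. c \<le> d \<and> (\<Sum>k\<in>T. load d k) < m}"

definition level :: real where
  "level = Sup underloaded"

lemma m_nonneg: "0 \<le> m"
proof -
  have "0 \<le> sum a T" by (rule sum_nonneg) (use a_nonneg in auto)
  thus ?thesis using a_sum by linarith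
qed

lemma bdd_below_load_set: "bdd_below ({x. 0 \<le> x \<and> x \<le> m \<and> d \<le> f k x} \<union> {m})"
  using m_nonneg by (auto intro: bdd_belowI[of _ 0])

lemma load_le: "0 \<le> x \<Longrightarrow> x \<le> m \<Longrightarrow> d \<le> f k x \<Longrightarrow> load d k \<le> x"
  unfolding load_def by (rule cInf_lower) (auto intro: bdd_below_load_set)

lemma load_le_m: "load d k \<le> m"
  unfolding load_def by (rule cInf_lower) (auto intro: bdd_below_load_set)

lemma load_nonneg: "0 \<le> load d k"
  unfolding load_def by (rule cInf_greatest) (use m_nonneg in auto)

lemma le_load:
  assumes "k \<in> T" "0 \<le> x" "x \<le> m" "f k x < d"
  shows "x \<le> load d k"
  unfolding load_def
proof (rule cInf_greatest)
  fix y assume y: "y \<in> {y. 0 \<le> y \<and> y \<le> m \<and> d \<le> f k y} \<union> {m}"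
  show "x \<le> y"
  proof (rule ccontr)
    assume "\<not> x \<le> y"
    hence "f k y \<le> f k x" using y assms mono mono_on_nonneg_le[of "f k" y x] by auto
    thus False using y assms \<open>\<not> x \<le> y\<close> by auto
  qed
qed simp

lemma load_le_sum: "k \<in> T \<Longrightarrow> load d k \<le> (\<Sum>k\<in>T. load d k)"
  using member_le_sum[of k T "load d"] finite load_nonneg by auto

lemma c_underloaded: "c \<in> underloaded"
proof -
  have "a k \<le> m" if "k \<in> T" for k
    using member_le_sum[of k T a] that finite a_nonneg a_sum by auto
  hence "(\<Sum>k\<in>T. load c k) \<le> sum a T"
    by (intro sum_mono load_le) (use a_nonneg a_level in auto)
  thus ?thesis using a_sum by (simp add: underloaded_def)
qed

lemma underloaded_le: "d \<in> underloaded \<Longrightarrow> k \<in> T \<Longrightarrow> d \<le> f k m"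
  using le_load[of k m d] load_le_sum[of k d] m_nonneg by (force simp: underloaded_def)

lemma bdd_above_underloaded: "bdd_above underloaded"
  using nonempty underloaded_le by (meson bdd_aboveI ex_in_conv)

lemma c_le_level: "c \<le> level"
  unfolding level_def by (rule cSup_upper[OF c_underloaded bdd_above_underloaded])

lemma less_level_underloaded: "e < level \<Longrightarrow> \<exists>d\<in>underloaded. e < d"
  using less_cSup_iff[of underloaded e] c_underloaded bdd_above_underloaded
  unfolding level_def by auto

lemma level_less_load:
  assumes "level < d"
  shows "m \<le> (\<Sum>k\<in>T. load d k)"
proof (rule ccontr)
  assume "\<not> m \<le> (\<Sum>k\<in>T. load d k)"
  hence "d \<in> underloaded" using c_le_level assms by (simp add: underloaded_def)
  hence "d \<le> level" unfolding level_def by (rule cSup_upper[OF _ bdd_above_underloaded])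
  thus False using assms by simp
qed

lemma level_le_f_m: "k \<in> T \<Longrightarrow> level \<le> f k m"
  using less_level_underloaded underloaded_le by (meson not_le order.strict_trans1)

lemma f_0_le_level: "k \<in> T \<Longrightarrow> f k 0 \<le> level"
  using mono_on_nonneg_le[of "f k" 0 "a k"] mono a_nonneg a_level c_le_level by fastforce

text \<open>Just below each \<open>lo k\<close>, resource \<open>k\<close> is cheaper than some underloaded level \<open>d\<close>, so the
  loads at \<open>d\<close>, which sum to less than \<open>m\<close>, nearly dominate \<open>lo\<close>.\<close>

lemma sum_le_if_below_level:
  assumes lo: "\<forall>k\<in>T. lo k \<le> m \<and> (\<forall>x. 0 \<le> x \<and> x < lo k \<longrightarrow> f k x < level)"
  shows "sum lo T \<le> m"
proof (rule field_le_epsilon)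
  fix \<epsilon> :: real assume "0 < \<epsilon>"
  define \<delta> where "\<delta> = \<epsilon> / card T"
  have \<delta>: "0 < \<delta>" "card T * \<delta> = \<epsilon>"
    using \<open>0 < \<epsilon>\<close> finite nonempty by (auto simp: \<delta>_def card_gt_0_iff)
  define x where "x k = max 0 (lo k - \<delta>)" for k
  define e where "e k = (if 0 < x k then f k (x k) else c - 1)" for k
  have "e k < level" if "k \<in> T" for k
    using lo that \<delta> c_le_level by (auto simp: e_def x_def)
  hence "Max (e ` T) < level" using finite nonempty by simp
  then obtain d where d: "d \<in> underloaded" "Max (e ` T) < d"
    using less_level_underloaded by blast
  have "x k \<le> load d k" if "k \<in> T" for k
  proof (cases "0 < x k")
    case True
    have "e k \<le> Max (e ` T)" using finite that by simp
    hence "f k (x k) < d" using True d(2) by (simp add: e_def)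
    thus ?thesis using True lo that \<delta> by (intro le_load) (auto simp: x_def)
  qed (auto simp: x_def load_nonneg)
  hence "(\<Sum>k\<in>T. x k) < m"
    using sum_mono[of T x "load d"] d(1) by (force simp: underloaded_def)
  moreover have "sum lo T - \<epsilon> \<le> (\<Sum>k\<in>T. x k)"
    using sum_mono[of T "\<lambda>k. lo k - \<delta>" x] \<delta>(2) by (simp add: x_def sum_subtractf)
  ultimately show "sum lo T \<le> m + \<epsilon>" by simp
qed

lemma sum_ge_if_above_level:
  assumes hi: "\<forall>k\<in>T. 0 \<le> hi k \<and> hi k \<le> m \<and> (\<forall>x. hi k < x \<and> x \<le> m \<longrightarrow> level < f k x)"
  shows "m \<le> sum hi T"
proof (rule field_le_epsilon)
  fix \<epsilon> :: real assume "0 < \<epsilon>"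
  define \<delta> where "\<delta> = \<epsilon> / card T"
  have \<delta>: "0 < \<delta>" "card T * \<delta> = \<epsilon>"
    using \<open>0 < \<epsilon>\<close> finite nonempty by (auto simp: \<delta>_def card_gt_0_iff)
  define x where "x k = min m (hi k + \<delta>)" for k
  define e where "e k = (if hi k < m then f k (x k) else level + 1)" for k
  have "level < e k" if "k \<in> T" for k
    using hi that \<delta> by (auto simp: e_def x_def)
  hence "level < Min (e ` T)" using finite nonempty by simp
  define d where "d = (level + Min (e ` T)) / 2"
  have d: "level < d" "d < Min (e ` T)"
    using \<open>level < Min (e ` T)\<close> by (simp_all add: d_def)
  have "load d k \<le> x k" if "k \<in> T" for k
  proof (cases "hi k < m")
    case True
    have "Min (e ` T) \<le> e k" using finite that by simp
    hence "d \<le> f k (x k)" using True d(2) by (simp add: e_def)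
    thus ?thesis using True hi that \<delta> by (intro load_le) (auto simp: x_def)
  qed (use hi that load_le_m \<delta> in \<open>auto simp: x_def\<close>)
  hence "m \<le> (\<Sum>k\<in>T. x k)"
    using sum_mono[of T "load d" x] level_less_load[OF d(1)] by fastforce
  moreover have "(\<Sum>k\<in>T. x k) \<le> sum hi T + \<epsilon>"
    using sum_mono[of T x "\<lambda>k. hi k + \<delta>"] \<delta>(2) by (simp add: x_def sum.distrib)
  ultimately show "m \<le> sum hi T + \<epsilon>" by simp
qed

lemma equalizing_allocation: "\<exists>y. (\<forall>k\<in>T. 0 \<le> y k \<and> f k (y k) = level) \<and> sum y T = m"
proof -
  have "\<exists>lo hi. 0 \<le> lo \<and> lo \<le> hi \<and> hi \<le> m \<and> f k lo = level \<and> f k hi = level \<and>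
      (\<forall>x. 0 \<le> x \<and> x < lo \<longrightarrow> f k x < level) \<and> (\<forall>x. hi < x \<and> x \<le> m \<longrightarrow> level < f k x)"
    if k: "k \<in> T" for k
  proof -
    obtain lo hi where "0 \<le> lo" "lo \<le> hi" "hi \<le> m" "f k lo = level" "f k hi = level"
      "\<And>x. 0 \<le> x \<Longrightarrow> x < lo \<Longrightarrow> f k x < level" "\<And>x. hi < x \<Longrightarrow> x \<le> m \<Longrightarrow> level < f k x"
      using mono_level_interval[OF _ _ m_nonneg f_0_le_level[OF k] level_le_f_m[OF k]]
        mono cont k by blast
    thus ?thesis by blast
  qed
  then obtain lo hi where lohi: "\<forall>k\<in>T. 0 \<le> lo k \<and> lo k \<le> hi k \<and> hi k \<le> m \<and>
      f k (lo k) = level \<and> f k (hi k) = level \<and>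
      (\<forall>x. 0 \<le> x \<and> x < lo k \<longrightarrow> f k x < level) \<and> (\<forall>x. hi k < x \<and> x \<le> m \<longrightarrow> level < f k x)"
    by metis
  obtain y where y: "\<forall>k\<in>T. lo k \<le> y k \<and> y k \<le> hi k" "sum y T = m"
  proof (rule sum_interpolate[OF finite])
    show "\<forall>k\<in>T. lo k \<le> hi k" using lohi by blast
    show "sum lo T \<le> m" by (rule sum_le_if_below_level) (use lohi in fastforce)
    show "m \<le> sum hi T" by (rule sum_ge_if_above_level) (use lohi in fastforce)
  qed
  have "0 \<le> y k \<and> f k (y k) = level" if "k \<in> T" for k
    using y(1) lohi that mono_on_nonneg_le[of "f k" "lo k" "y k"] mono_on_nonneg_le[of "f k" "y k" "hi k"]
      mono by force
  thus ?thesis using y(2) by blast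
qed

end

lemma equalizing_level_exists:
  fixes f :: "'a \<Rightarrow> real \<Rightarrow> real"
  assumes "finite T" "T \<noteq> {}" "\<forall>k\<in>T. mono_on {0..} (f k)" "\<forall>k\<in>T. continuous_on {0..} (f k)"
    and "\<forall>k\<in>T. 0 \<le> a k" "\<forall>k\<in>T. f k (a k) = c" "sum a T \<le> m"
  shows "\<exists>d y. c \<le> d \<and> (\<forall>k\<in>T. 0 \<le> y k \<and> f k (y k) = d) \<and> sum y T = m"
proof (cases "sum a T = m")
  case True
  thus ?thesis using assms(5,6) by blast
next
  case False
  interpret level_search T f a c m
    using assms False by unfold_locales auto
  show ?thesis using equalizing_allocation c_le_level by blast
qed

lemma least_point_at_level:
  fixes \<phi> :: "real \<Rightarrow> real"
  assumes "continuous_on {0..} \<phi>" "0 \<le> x" "\<phi> x = h"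
  obtains a where "0 \<le> a" "\<phi> a = h" "\<And>x. 0 \<le> x \<Longrightarrow> \<phi> x = h \<Longrightarrow> a \<le> x"
proof -
  define Z where "Z = {x \<in> {0..}. \<phi> x = h}"
  have "Z \<noteq> {}" "bdd_below Z" using assms(2,3) by (auto simp: Z_def intro: bdd_belowI[of _ 0])
  moreover have "closed Z"
    unfolding Z_def by (rule continuous_closed_preimage_constant[OF assms(1)]) auto
  ultimately have "Inf Z \<in> Z" "\<And>x. x \<in> Z \<Longrightarrow> Inf Z \<le> x"
    by (auto intro: closed_contains_Inf cInf_lower)
  thus ?thesis using that by (auto simp: Z_def)
qed

lemma sum_lt_if_level_lt:
  fixes f :: "'a \<Rightarrow> real \<Rightarrow> real"
  assumes "finite S" "S \<noteq> {}" "\<forall>k\<in>S. mono_on {0..} (f k)"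
    and "\<forall>k\<in>S. 0 \<le> y k \<and> f k (x k) = c \<and> f k (y k) = c'" "c < c'"
  shows "sum x S < sum y S"
proof (rule sum_strict_mono[OF assms(1,2)])
  fix k assume k: "k \<in> S"
  show "x k < y k"
  proof (rule ccontr)
    assume "\<not> x k < y k"
    hence "f k (y k) \<le> f k (x k)" using assms(3,4) k mono_on_nonneg_le[of "f k" "y k" "x k"] by auto
    thus False using assms(4,5) k by auto
  qed
qed

lemma equal_levels_unique:
  fixes f :: "'a \<Rightarrow> real \<Rightarrow> real"
  assumes "finite S" "S \<noteq> {}" "\<forall>k\<in>S. mono_on {0..} (f k)"
    and "\<forall>k\<in>S. 0 \<le> x k \<and> f k (x k) = c" "\<forall>k\<in>S. 0 \<le> y k \<and> f k (y k) = c'"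
    and "sum x S = sum y S"
  shows "c = c'"
  using sum_lt_if_level_lt[OF assms(1-3), of y x c c'] sum_lt_if_level_lt[OF assms(1-3), of x y c' c]
    assms(4-6) by (cases c c' rule: linorder_cases) auto

lemma eqz_eq_Some_iff:
  fixes f :: "nat \<Rightarrow> real \<Rightarrow> real"
  assumes "finite S" "S \<noteq> {}" "\<forall>k\<in>S. mono_on {0..} (f k)"
  shows "eqz f S m = Some c \<longleftrightarrow> (\<exists>x. (\<forall>k\<in>S. 0 \<le> x k \<and> f k (x k) = c) \<and> sum x S = m)"
proof -
  define P where "P c x \<longleftrightarrow> (\<forall>k\<in>S. 0 \<le> x k) \<and> sum x S = m \<and> (\<forall>k\<in>S. f k (x k) = c)" for c x
  have unique: "c = c'" if "P c x" "P c' y" for c c' x y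
    using equal_levels_unique[OF assms, of x c y c'] that by (auto simp: P_def)
  have "eqz f S m = (if \<exists>c x. P c x then Some (SOME c. \<exists>x. P c x) else None)"
    by (simp only: eqz_def P_def)
  also have "\<dots> = Some c \<longleftrightarrow> (\<exists>x. P c x)"
    using someI_ex[of "\<lambda>c. \<exists>x. P c x"] unique by auto
  finally show ?thesis by (auto simp: P_def)
qed

definition demand :: "('a set \<Rightarrow> real) \<Rightarrow> 'a set \<Rightarrow> real" where
  "demand mu S = (\<Sum>R\<in>{R. R \<noteq> {} \<and> R \<subseteq> S}. mu R)"

definition demand_touching :: "('a set \<Rightarrow> real) \<Rightarrow> 'a set \<Rightarrow> 'a set \<Rightarrow> real" where
  "demand_touching mu S S' = (\<Sum>R\<in>{R. R \<subseteq> S \<and> R \<inter> S' \<noteq> {}}. mu R)"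

lemma demand_empty [simp]: "demand mu {} = 0"
  by (simp add: demand_def)

lemma demand_split:
  assumes "finite S" "S' \<subseteq> S"
  shows "demand mu S = demand mu (S - S') + demand_touching mu S S'"
proof -
  have "{R. R \<noteq> {} \<and> R \<subseteq> S} = {R. R \<noteq> {} \<and> R \<subseteq> S - S'} \<union> {R. R \<subseteq> S \<and> R \<inter> S' \<noteq> {}}"
    by blast
  moreover have "finite {R. R \<noteq> {} \<and> R \<subseteq> S - S'}" "finite {R. R \<subseteq> S \<and> R \<inter> S' \<noteq> {}}"
    using assms(1) by (auto intro: finite_subset[of _ "Pow S"])
  ultimately show ?thesis
    unfolding demand_def demand_touching_def by (subst sum.union_disjoint[symmetric]) auto
qed

lemma demand_minus_sum_diff_le_iff:
  assumes "finite S" "S' \<subseteq> S"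
  shows "demand mu (S - S') - sum A (S - S') \<le> demand mu S - sum A S \<longleftrightarrow>
    sum A S' \<le> demand_touching mu S S'"
  using demand_split[OF assms, of mu] sum_diff[OF assms, of A] by linarith

definition dominates_subsets :: "('a set \<Rightarrow> real) \<Rightarrow> 'a set \<Rightarrow> bool" where
  "dominates_subsets \<phi> S \<longleftrightarrow> (\<forall>T\<subseteq>S. \<phi> T \<le> \<phi> S)"

lemma dominates_subsets_Un:
  assumes sm: "\<And>X Y. X \<subseteq> U \<Longrightarrow> Y \<subseteq> U \<Longrightarrow> \<phi> X + \<phi> Y \<le> \<phi> (X \<union> Y) + \<phi> (X \<inter> Y)"
    and "S1 \<subseteq> U" "dominates_subsets \<phi> S1" "S2 \<subseteq> U" "dominates_subsets \<phi> S2"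
  shows "dominates_subsets \<phi> (S1 \<union> S2)"
  unfolding dominates_subsets_def
proof (intro allI impI)
  fix T assume T: "T \<subseteq> S1 \<union> S2"
  have "\<phi> T + \<phi> S1 \<le> \<phi> (T \<union> S1) + \<phi> (T \<inter> S1)" "\<phi> (T \<inter> S1) \<le> \<phi> S1"
    using sm[of T S1] T assms(2-5) by (auto simp: dominates_subsets_def)
  moreover have "T \<union> S1 \<union> S2 = S1 \<union> S2" using T by blast
  hence "\<phi> (T \<union> S1) + \<phi> S2 \<le> \<phi> (S1 \<union> S2) + \<phi> ((T \<union> S1) \<inter> S2)"
    using sm[of "T \<union> S1" S2] T assms(2,4) by auto
  moreover have "\<phi> ((T \<union> S1) \<inter> S2) \<le> \<phi> S2" using assms(5) by (auto simp: dominates_subsets_def)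
  ultimately show "\<phi> T \<le> \<phi> (S1 \<union> S2)" by linarith
qed

lemma dominates_subsets_Union:
  assumes sm: "\<And>X Y. X \<subseteq> U \<Longrightarrow> Y \<subseteq> U \<Longrightarrow> \<phi> X + \<phi> Y \<le> \<phi> (X \<union> Y) + \<phi> (X \<inter> Y)"
    and "finite F" "F \<noteq> {}" "\<forall>S\<in>F. S \<subseteq> U \<and> dominates_subsets \<phi> S"
  shows "dominates_subsets \<phi> (\<Union>F)"
  using assms(2-4)
proof (induction F rule: finite_ne_induct)
  case (insert S F)
  have "\<Union>F \<subseteq> U" using insert.prems by blast
  thus ?case using dominates_subsets_Un[of U \<phi> S "\<Union>F"] sm insert by auto
qed simp

locale resource_game =
  fixes n :: nat and f :: "nat \<Rightarrow> real \<Rightarrow> real" and mu :: "nat set \<Rightarrow> real"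
  assumes mono: "\<forall>j\<in>{1..n}. mono_on {0..} (f j)"
    and cont: "\<forall>j\<in>{1..n}. continuous_on {0..} (f j)"
    and mu_nonneg: "\<forall>R. R \<noteq> {} \<and> R \<subseteq> {1..n} \<longrightarrow> 0 \<le> mu R"
begin

lemma E_G_eq_Some_iff:
  assumes "S \<subseteq> {1..n}" "S \<noteq> {}"
  shows "E_G f mu S = Some c \<longleftrightarrow> (\<exists>x. (\<forall>k\<in>S. 0 \<le> x k \<and> f k (x k) = c) \<and> sum x S = demand mu S)"
  unfolding E_G_def demand_def
  by (rule eqz_eq_Some_iff) (use assms mono finite_subset in auto)

lemma eqz_eq_Some_iff_subset:
  assumes "S \<subseteq> {1..n}" "S \<noteq> {}"
  shows "eqz f S m = Some c \<longleftrightarrow> (\<exists>x. (\<forall>k\<in>S. 0 \<le> x k \<and> f k (x k) = c) \<and> sum x S = m)"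
  by (rule eqz_eq_Some_iff) (use assms mono finite_subset in auto)

lemma M_G_eq:
  "M_G f mu S = {S'. S' \<noteq> {} \<and> S' \<subseteq> S \<and>
     (\<forall>m. 0 \<le> m \<and> m \<le> demand_touching mu S S' \<longrightarrow> eqz f S' m \<noteq> E_G f mu S)}"
  by (simp add: M_G_def demand_touching_def)

lemma demand_supermodular:
  assumes "X \<subseteq> {1..n}" "Y \<subseteq> {1..n}"
  shows "demand mu X + demand mu Y \<le> demand mu (X \<union> Y) + demand mu (X \<inter> Y)"
proof -
  define F where "F Z = {R. R \<noteq> {} \<and> R \<subseteq> Z}" for Z :: "nat set"
  have demand_F: "demand mu Z = sum mu (F Z)" for Z by (simp add: demand_def F_def)
  have finite_F: "finite (F Z)" if "Z \<subseteq> {1..n}" for Z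
    by (rule finite_subset[of _ "Pow {1..n}"]) (use that in \<open>auto simp: F_def\<close>)
  have inter: "F X \<inter> F Y = F (X \<inter> Y)" by (auto simp: F_def)
  have "sum mu (F X) + sum mu (F Y) = sum mu (F X \<union> F Y) + sum mu (F (X \<inter> Y))"
    using sum.union_inter[OF finite_F[OF assms(1)] finite_F[OF assms(2)], of mu]
    unfolding inter by linarith
  moreover have "sum mu (F X \<union> F Y) \<le> sum mu (F (X \<union> Y))"
  proof (rule sum_mono2)
    show "finite (F (X \<union> Y))" using assms by (intro finite_F) auto
    show "F X \<union> F Y \<subseteq> F (X \<union> Y)" by (auto simp: F_def)
    show "0 \<le> mu R" if "R \<in> F (X \<union> Y) - (F X \<union> F Y)" for R
    proof -
      have "R \<noteq> {}" "R \<subseteq> {1..n}" using that assms by (auto simp: F_def)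
      thus ?thesis using mu_nonneg by blast
    qed
  qed
  ultimately show ?thesis unfolding demand_F by linarith
qed

lemma demand_minus_sum_supermodular:
  assumes "X \<subseteq> {1..n}" "Y \<subseteq> {1..n}"
  shows "demand mu X - sum A X + (demand mu Y - sum A Y) \<le>
    demand mu (X \<union> Y) - sum A (X \<union> Y) + (demand mu (X \<inter> Y) - sum A (X \<inter> Y))"
proof -
  have "finite X" "finite Y" using assms finite_subset by auto
  hence "sum A X + sum A Y = sum A (X \<union> Y) + sum A (X \<inter> Y)"
    using sum.union_inter[of X Y A] by linarith
  thus ?thesis using demand_supermodular[OF assms] by linarith
qed

lemma blocking_overloaded:
  assumes "S \<subseteq> {1..n}" "S' \<in> M_G f mu S" "E_G f mu S = Some c"
    and x: "\<forall>k\<in>S. 0 \<le> x k \<and> f k (x k) = c"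
  shows "demand_touching mu S S' < sum x S'"
proof (rule ccontr)
  assume "\<not> demand_touching mu S S' < sum x S'"
  moreover have S': "S' \<noteq> {}" "S' \<subseteq> S" using assms(2) by (auto simp: M_G_eq)
  moreover have "eqz f S' (sum x S') = Some c"
    using eqz_eq_Some_iff_subset[of S'] S' assms(1) x by blast
  moreover have "0 \<le> sum x S'" by (intro sum_nonneg) (use x S' in auto)
  ultimately show False using assms(2,3) by (auto simp: M_G_eq)
qed

lemma E_G_above_if_fits:
  assumes "S \<subseteq> {1..n}" "S \<noteq> {}"
    and "\<forall>k\<in>S. 0 \<le> x k \<and> f k (x k) = c" "sum x S \<le> demand mu S"
  shows "\<exists>d. c \<le> d \<and> E_G f mu S = Some d"
proof -
  have "finite S" using assms(1) finite_subset by blast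
  hence "\<exists>d y. c \<le> d \<and> (\<forall>k\<in>S. 0 \<le> y k \<and> f k (y k) = d) \<and> sum y S = demand mu S"
    by (intro equalizing_level_exists[of _ _ x]) (use assms mono cont in auto)
  thus ?thesis using E_G_eq_Some_iff[OF assms(1,2)] by blast
qed

lemma E_G_remove_blocking:
  assumes "S \<subseteq> {1..n}" "S \<noteq> {}" "S' \<in> M_G f mu S" "E_G f mu S = Some c"
  shows "S - S' \<noteq> {} \<and> (\<exists>d. c \<le> d \<and> E_G f mu (S - S') = Some d)"
proof -
  obtain x where x: "\<forall>k\<in>S. 0 \<le> x k \<and> f k (x k) = c" "sum x S = demand mu S"
    using assms(4) E_G_eq_Some_iff[OF assms(1,2)] by blast
  have S': "S' \<subseteq> S" using assms(3) by (simp add: M_G_eq)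
  have fin: "finite S" using assms(1) finite_subset by blast
  have less: "sum x (S - S') < demand mu (S - S')"
    using blocking_overloaded[OF assms(1,3,4) x(1)] demand_split[OF fin S', of mu]
      sum_diff[OF fin S', of x] x(2) by linarith
  hence ne: "S - S' \<noteq> {}" by (metis demand_empty sum.empty less_irrefl)
  thus ?thesis using E_G_above_if_fits[of "S - S'" x c] assms(1) x(1) less by auto
qed

lemma exists_D_G_above:
  "S \<noteq> {} \<Longrightarrow> S \<subseteq> {1..n} \<Longrightarrow> E_G f mu S = Some c \<Longrightarrow> \<exists>S0\<in>D_G n f mu. c \<le> the (E_G f mu S0)"
proof (induction "card S" arbitrary: S c rule: less_induct)
  case less
  show ?case
  proof (cases "M_G f mu S = {}")
    case True
    hence "S \<in> D_G n f mu" using less.prems by (simp add: D_G_def)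
    thus ?thesis using less.prems by force
  next
    case False
    then obtain S' where S': "S' \<in> M_G f mu S" by blast
    then obtain d where d: "c \<le> d" "E_G f mu (S - S') = Some d" and ne: "S - S' \<noteq> {}"
      using E_G_remove_blocking[OF less.prems(2,1) _ less.prems(3)] by blast
    have "card (S - S') < card S"
      using S' less.prems(2) finite_subset[OF less.prems(2)]
      by (intro psubset_card_mono) (auto simp: M_G_eq)
    thus ?thesis using less.hyps[of "S - S'" d] ne less.prems(2) d by force
  qed
qed

lemma demand_singleton: "demand mu {j} = mu {j}"
proof -
  have "{R. R \<noteq> {} \<and> R \<subseteq> {j}} = {{j}}" by auto
  thus ?thesis by (simp add: demand_def)
qed

lemma demand_touching_singleton: "demand_touching mu {j} {j} = mu {j}"
proof -
  have "{R. R \<subseteq> {j} \<and> R \<inter> {j} \<noteq> {}} = {{j}}" by auto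
  thus ?thesis by (simp add: demand_touching_def)
qed

lemma singleton_in_D_G:
  assumes "j \<in> {1..n}"
  shows "{j} \<in> D_G n f mu"
proof -
  have mu_j: "0 \<le> mu {j}" using mu_nonneg assms by auto
  have "E_G f mu {j} = Some (f j (mu {j}))"
    using E_G_eq_Some_iff[of "{j}"] assms mu_j by (auto simp: demand_singleton)
  moreover have "M_G f mu {j} = {}"
  proof -
    have "eqz f {j} (mu {j}) = E_G f mu {j}" by (simp add: E_G_def demand_def[symmetric] demand_singleton)
    hence "{j} \<notin> M_G f mu {j}" using mu_j by (auto simp: M_G_eq demand_touching_singleton)
    moreover have "S' = {j}" if "S' \<in> M_G f mu {j}" for S' using that by (auto simp: M_G_eq)
    ultimately show ?thesis by blast
  qed
  ultimately show ?thesis using assms by (simp add: D_G_def)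
qed

lemma finite_D_G: "finite (D_G n f mu)"
  by (rule finite_subset[of _ "Pow {1..n}"]) (auto simp: D_G_def)

lemma le_h_G: "S \<in> D_G n f mu \<Longrightarrow> the (E_G f mu S) \<le> h_G n f mu"
  unfolding h_G_def using finite_D_G by simp

lemma h_G_attained:
  assumes "1 \<le> n"
  shows "\<exists>S\<in>D_G n f mu. E_G f mu S = Some (h_G n f mu)"
proof -
  have ne: "D_G n f mu \<noteq> {}" using singleton_in_D_G[of 1] assms by auto
  have "h_G n f mu \<in> (\<lambda>S. the (E_G f mu S)) ` D_G n f mu"
    unfolding h_G_def by (rule Max_in) (use finite_D_G ne in auto)
  then obtain S where "S \<in> D_G n f mu" "the (E_G f mu S) = h_G n f mu" by auto
  thus ?thesis by (auto simp: D_G_def)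
qed

text \<open>Since no part \<open>S - T\<close> blocks \<open>S\<close>,
  its least loads fit into the demand that can reach it.\<close>

lemma D_G_dominates_subsets:
  assumes "S \<in> D_G n f mu" "E_G f mu S = Some c" "\<forall>k\<in>S. \<forall>x. 0 \<le> x \<and> f k x = c \<longrightarrow> A k \<le> x"
  shows "dominates_subsets (\<lambda>T. demand mu T - sum A T) S"
  unfolding dominates_subsets_def
proof (intro allI impI)
  fix T assume T: "T \<subseteq> S"
  have S: "S \<subseteq> {1..n}" "M_G f mu S = {}" using assms(1) by (auto simp: D_G_def)
  show "demand mu T - sum A T \<le> demand mu S - sum A S"
  proof (cases "T = S")
    case False
    define S' where "S' = S - T"
    have S': "S' \<noteq> {}" "S' \<subseteq> S" "S - S' = T" using T False by (auto simp: S'_def)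
    have "S' \<notin> M_G f mu S" using S(2) by blast
    then obtain m where m: "0 \<le> m" "m \<le> demand_touching mu S S'" "eqz f S' m = Some c"
      using S'(1,2) assms(2) unfolding M_G_eq by auto
    then obtain x where x: "\<forall>k\<in>S'. 0 \<le> x k \<and> f k (x k) = c" "sum x S' = m"
      using eqz_eq_Some_iff_subset[of S'] S' S(1) by blast
    have "sum A S' \<le> sum x S'"
      by (rule sum_mono) (use x S' assms(3) in auto)
    hence "sum A S' \<le> demand_touching mu S S'" using x(2) m(2) by linarith
    moreover have "finite S" using S(1) finite_subset by blast
    ultimately show ?thesis using demand_minus_sum_diff_le_iff[of S S' mu A] S'(2,3) by simp
  qed simp
qed

lemma M_G_empty_if_dominates_subsets:
  assumes "S \<subseteq> {1..n}" "E_G f mu S = Some c" "\<forall>k\<in>S. 0 \<le> A k \<and> f k (A k) = c"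
    and "dominates_subsets (\<lambda>T. demand mu T - sum A T) S"
  shows "M_G f mu S = {}"
proof (rule ccontr)
  assume "M_G f mu S \<noteq> {}"
  then obtain S' where S': "S' \<noteq> {}" "S' \<subseteq> S"
    "\<forall>m. 0 \<le> m \<and> m \<le> demand_touching mu S S' \<longrightarrow> eqz f S' m \<noteq> E_G f mu S"
    unfolding M_G_eq by blast
  have "finite S" using assms(1) finite_subset by blast
  hence "sum A S' \<le> demand_touching mu S S'"
    using assms(4) demand_minus_sum_diff_le_iff[of S S' mu A] S'(2)
    by (simp add: dominates_subsets_def)
  moreover have "0 \<le> sum A S'" by (intro sum_nonneg) (use assms(3) S'(2) in auto)
  moreover have "eqz f S' (sum A S') = Some c"
    using eqz_eq_Some_iff_subset[of S'] S' assms(1,3) by blast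
  ultimately show False using S'(3) assms(2) by auto
qed

lemma P_G_subset: "P_G n f mu \<subseteq> {1..n}"
  by (auto simp: P_G_def D_G_def)

lemma P_G_nonempty: "1 \<le> n \<Longrightarrow> P_G n f mu \<noteq> {}"
  using h_G_attained by (fastforce simp: P_G_def D_G_def)

lemma P_G_least_loads:
  assumes "1 \<le> n"
  shows "\<exists>A. (\<forall>k\<in>P_G n f mu. 0 \<le> A k \<and> f k (A k) = h_G n f mu) \<and>
    dominates_subsets (\<lambda>T. demand mu T - sum A T) (P_G n f mu)"
proof -
  define h where "h = h_G n f mu"
  define Fam where "Fam = {S \<in> D_G n f mu. E_G f mu S = Some h}"
  have P: "P_G n f mu = \<Union>Fam" by (simp add: P_G_def Fam_def h_def)
  have least: "\<forall>k\<in>\<Union>Fam. \<exists>a. 0 \<le> a \<and> f k a = h \<and> (\<forall>x. 0 \<le> x \<and> f k x = h \<longrightarrow> a \<le> x)"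
  proof
    fix k assume "k \<in> \<Union>Fam"
    then obtain S where S: "S \<in> Fam" "k \<in> S" by blast
    hence "S \<subseteq> {1..n}" "S \<noteq> {}" "E_G f mu S = Some h" by (auto simp: Fam_def D_G_def)
    then obtain x where x: "0 \<le> x k" "f k (x k) = h"
      using E_G_eq_Some_iff S(2) by blast
    have cont_k: "continuous_on {0..} (f k)" using cont \<open>S \<subseteq> {1..n}\<close> S(2) by blast
    obtain a where "0 \<le> a" "f k a = h" "\<And>x. 0 \<le> x \<Longrightarrow> f k x = h \<Longrightarrow> a \<le> x"
      using least_point_at_level[OF cont_k x] by metis
    thus "\<exists>a. 0 \<le> a \<and> f k a = h \<and> (\<forall>x. 0 \<le> x \<and> f k x = h \<longrightarrow> a \<le> x)" by blast
  qed
  obtain A where A: "\<forall>k\<in>\<Union>Fam. 0 \<le> A k \<and> f k (A k) = h \<and> (\<forall>x. 0 \<le> x \<and> f k x = h \<longrightarrow> A k \<le> x)"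
    using bchoice[OF least] by blast
  have "\<forall>S\<in>Fam. S \<subseteq> {1..n} \<and> dominates_subsets (\<lambda>T. demand mu T - sum A T) S"
  proof
    fix S assume "S \<in> Fam"
    hence S: "S \<in> D_G n f mu" "E_G f mu S = Some h" "S \<subseteq> \<Union>Fam" "S \<subseteq> {1..n}"
      by (auto simp: Fam_def D_G_def)
    thus "S \<subseteq> {1..n} \<and> dominates_subsets (\<lambda>T. demand mu T - sum A T) S"
      using D_G_dominates_subsets[OF S(1,2), of A] A by blast
  qed
  moreover have "finite Fam" using finite_D_G by (simp add: Fam_def)
  moreover have "Fam \<noteq> {}" using h_G_attained[OF assms] by (auto simp: Fam_def h_def)
  ultimately have "dominates_subsets (\<lambda>T. demand mu T - sum A T) (\<Union>Fam)"
    using dominates_subsets_Union[of "{1..n}", OF demand_minus_sum_supermodular[of _ _ A]] by blast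
  thus ?thesis using A P h_def by auto
qed

end

theorem mainTheorem18:
  fixes n :: nat and f :: "nat \<Rightarrow> real \<Rightarrow> real" and mu :: "nat set \<Rightarrow> real"
  assumes "1 \<le> n"
    and "\<forall>j\<in>{1..n}. mono_on {0..} (f j)"
    and "\<forall>j\<in>{1..n}. continuous_on {0..} (f j)"
    and "\<forall>R. R \<noteq> {} \<and> R \<subseteq> {1..n} \<longrightarrow> 0 \<le> mu R"
  shows "P_G n f mu \<in> D_G n f mu \<and> E_G f mu (P_G n f mu) = Some (h_G n f mu)"
proof -
  interpret resource_game n f mu using assms(2-4) by unfold_locales
  let ?P = "P_G n f mu" and ?h = "h_G n f mu"
  obtain A where A: "\<forall>k\<in>?P. 0 \<le> A k \<and> f k (A k) = ?h"
    and dom: "dominates_subsets (\<lambda>T. demand mu T - sum A T) ?P"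
    using P_G_least_loads[OF assms(1)] by blast
  have P: "?P \<subseteq> {1..n}" "?P \<noteq> {}" using P_G_subset P_G_nonempty[OF assms(1)] .
  have "demand mu {} - sum A {} \<le> demand mu ?P - sum A ?P"
    using dom unfolding dominates_subsets_def by blast
  then obtain d where d: "?h \<le> d" "E_G f mu ?P = Some d"
    using E_G_above_if_fits[OF P A] by auto
  moreover have "d \<le> ?h"
    using exists_D_G_above[OF P(2,1) d(2)] le_h_G by fastforce
  ultimately have E: "E_G f mu ?P = Some ?h" by simp
  moreover have "M_G f mu ?P = {}" by (rule M_G_empty_if_dominates_subsets[OF P(1) E A dom])
  ultimately show ?thesis using P by (simp add: D_G_def)
qed

end
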